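(* For every positive integer $n$, $|M_e(\mathcal{D},n)-M_o(\mathcal{D},n)|\le 2$, and $M_e(\mathcal{D},n)=M_o(\mathcal{D},n)$ for infinitely many positive integers $n$.
   Context: $M_e(\mathcal{D},n)$ (resp. $M_o(\mathcal{D},n)$) is the number of partitions of $n$ into distinct parts with even (resp. odd) crank, where for a partition into distinct parts the crank is its largest part if $1$ is not a part, and is (number of parts) $-2$ if $1$ is a part. *)

theory Defs
  imports Main
begin

definition distinct_partitions :: "nat \<Rightarrow> nat set set" where
  "distinct_partitions n = {P. finite P \<and> 0 \<notin> P \<and> \<Sum>P = n}"

definition dcrank :: "nat set \<Rightarrow> int" where
  "dcrank P = (if 1 \<in> P then int (card P) - 2 else int (Max P))"

definition M_e :: "nat \<Rightarrow> nat" where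
  "M_e n = card {P \<in> distinct_partitions n. even (dcrank P)}"

definition M_o :: "nat \<Rightarrow> nat" where
  "M_o n = card {P \<in> distinct_partitions n. odd (dcrank P)}"

end

(* Franklin's involution, which either spreads the smallest part over the top run of
   consecutive largest parts or peels that run off into a new smallest part, changes both
   the number of parts and the largest part by one.  Hence the signed counts of the distinct
   partitions of n by number of parts and by largest part vanish except at the pentagonal
   numbers k(3k - 1)/2 and k(3k + 1)/2, where only the partitions {k..2k-1} and {k+1..2k}
   survive.
   Adding or removing the part 1 turns these into recurrences for the same two signed counts
   over partitions without a part 1, which are therefore explicit in the coordinates
   n = k(3k - 1)/2 + j, 0 <= j <= 3k.  The crank of a partition without 1 is its largest part,
   and a partition with 1 arises from a 1-free partition Q of n - 1 and has crank card Q - 1.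
   So M_e(n) - M_o(n) is the difference of two explicit quantities: it lies in [-2, 2] and
   vanishes at j = k + 1. *)

theory Submission
  imports Defs "HOL-Library.Disjoint_Sets" "HOL-Library.Infinite_Set"
begin

lemma mem_distinct_partitions: "P \<in> distinct_partitions n \<longleftrightarrow> finite P \<and> 0 \<notin> P \<and> \<Sum>P = n"
  by (simp add: distinct_partitions_def)

lemma distinct_partitions_part_le: "P \<in> distinct_partitions n \<Longrightarrow> x \<in> P \<Longrightarrow> x \<le> n"
  using member_le_sum[of x P id] by (auto simp: mem_distinct_partitions)

lemma finite_distinct_partitions: "finite (distinct_partitions n)"
proof (rule finite_subset)
  show "distinct_partitions n \<subseteq> Pow {..n}"
    using distinct_partitions_part_le by blast
qed simp

lemma distinct_partitions_0: "distinct_partitions 0 = {{}}"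
  by (auto simp: mem_distinct_partitions) (metis neq0_conv)

lemma distinct_partitions_nonempty: "P \<in> distinct_partitions n \<Longrightarrow> 0 < n \<Longrightarrow> P \<noteq> {}"
  by (auto simp: mem_distinct_partitions)

section \<open>Franklin's involution\<close>

text \<open>The length of the run \<open>Max P, Max P - 1, \<dots>\<close> of parts; the \<open>LEAST\<close> exists
  only if \<open>0 \<notin> P\<close>.\<close>
definition top_run :: "nat set \<Rightarrow> nat" where
  "top_run P = (LEAST i. Max P - i \<notin> P)"

lemma top_run_mem: "i < top_run P \<Longrightarrow> Max P - i \<in> P"
  unfolding top_run_def using not_less_Least by blast

lemma Max_diff_top_run_not_mem: "0 \<notin> P \<Longrightarrow> Max P - top_run P \<notin> P"
  unfolding top_run_def by (rule LeastI[of _ "Max P"]) simp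

lemma top_run_le_Max: "0 \<notin> P \<Longrightarrow> top_run P \<le> Max P"
  unfolding top_run_def by (rule Least_le) simp

lemma top_run_eqI:
  assumes "Max P - t \<notin> P" and "\<And>i. i < t \<Longrightarrow> Max P - i \<in> P"
  shows "top_run P = t"
  unfolding top_run_def using assms by (intro Least_equality) (auto simp: not_le[symmetric])

lemma top_run_geI:
  assumes "0 \<notin> P" and "\<And>i. i < t \<Longrightarrow> Max P - i \<in> P"
  shows "t \<le> top_run P"
  using assms Max_diff_top_run_not_mem not_le by blast

text \<open>With \<open>s\<close> the smallest part and \<open>r\<close> the length of the top run, Franklin moves \<open>s\<close>
  onto the run if \<open>s \<le> r\<close> and the run down to a new smallest part if \<open>r < s\<close>, except
  when the run reaches \<open>s\<close> and \<open>s = r\<close> resp. \<open>s = r + 1\<close>.\<close>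
definition smallest_movable :: "nat set \<Rightarrow> bool" where
  "smallest_movable P \<longleftrightarrow>
     Min P \<le> top_run P \<and> (Min P < top_run P \<or> Min P + top_run P \<le> Max P)"

definition run_movable :: "nat set \<Rightarrow> bool" where
  "run_movable P \<longleftrightarrow>
     top_run P < Min P \<and> (top_run P + 1 < Min P \<or> Min P + top_run P \<le> Max P)"

text \<open>Adding 1 to each of the \<open>Min P\<close> largest parts shifts the block
  \<open>{Max P + 1 - Min P..Max P}\<close> of the top run up by one.\<close>
definition move_smallest :: "nat set \<Rightarrow> nat set" where
  "move_smallest P = insert (Max P + 1) (P - {Min P, Max P + 1 - Min P})"

text \<open>Subtracting 1 from each part of the top run shifts it down by one.\<close>
definition move_run :: "nat set \<Rightarrow> nat set" where
  "move_run P = insert (top_run P) (insert (Max P - top_run P) (P - {Max P}))"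

definition franklin :: "nat set \<Rightarrow> nat set" where
  "franklin P = (if smallest_movable P then move_smallest P else move_run P)"

definition franklin_exceptional :: "nat set \<Rightarrow> bool" where
  "franklin_exceptional P \<longleftrightarrow> \<not> smallest_movable P \<and> \<not> run_movable P"

context
  fixes P :: "nat set"
  assumes finite_P: "finite P" and P_nonempty: "P \<noteq> {}" and zero_not_mem_P: "0 \<notin> P"
begin

lemma Min_pos: "0 < Min P"
  using Min_in[OF finite_P P_nonempty] zero_not_mem_P by (metis gr0I)

lemma top_run_pos: "0 < top_run P"
  using Max_diff_top_run_not_mem[OF zero_not_mem_P] Max_in[OF finite_P P_nonempty] by (metis gr0I diff_zero)

lemma Min_add_top_run_le: "Min P + top_run P \<le> Max P + 1"
proof -
  have "Max P - (top_run P - 1) \<in> P"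
    using top_run_pos by (intro top_run_mem) simp
  then have "Min P \<le> Max P - (top_run P - 1)"
    using finite_P by simp
  then show ?thesis
    using top_run_pos top_run_le_Max[OF zero_not_mem_P] by linarith
qed

lemma Max_add_one_not_mem: "Max P + 1 \<notin> P"
  using finite_P by (auto dest: Max_ge)

context
  assumes movable: "smallest_movable P"
begin

lemma Max_add_one_diff_Min_mem: "Max P + 1 - Min P \<in> P"
proof -
  have "Max P - (Min P - 1) \<in> P"
    using movable Min_pos by (intro top_run_mem) (auto simp: smallest_movable_def)
  moreover have "Max P - (Min P - 1) = Max P + 1 - Min P"
    using Min_pos Min_le[OF finite_P Max_in[OF finite_P P_nonempty]] by simp
  ultimately show ?thesis by simp
qed

lemma Min_less_Max_add_one_diff_Min: "Min P < Max P + 1 - Min P"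
  using movable Min_add_top_run_le unfolding smallest_movable_def by linarith

lemma sum_move_smallest: "\<Sum>(move_smallest P) = \<Sum>P"
proof -
  have "P = insert (Min P) (insert (Max P + 1 - Min P) (P - {Min P, Max P + 1 - Min P}))"
    using Max_add_one_diff_Min_mem Min_in[OF finite_P P_nonempty] by blast
  then have "\<Sum>P = \<Sum>(insert (Min P) (insert (Max P + 1 - Min P) (P - {Min P, Max P + 1 - Min P})))"
    by (rule arg_cong)
  also have "\<dots> = Min P + (Max P + 1 - Min P) + \<Sum>(P - {Min P, Max P + 1 - Min P})"
    using finite_P Min_less_Max_add_one_diff_Min by simp
  also have "\<dots> = \<Sum>(move_smallest P)"
    using finite_P Max_add_one_not_mem Min_less_Max_add_one_diff_Min by (simp add: move_smallest_def)
  finally show ?thesis ..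
qed

lemma card_move_smallest: "card (move_smallest P) + 1 = card P"
proof -
  have sub: "{Min P, Max P + 1 - Min P} \<subseteq> P"
    using Max_add_one_diff_Min_mem Min_in[OF finite_P P_nonempty] by blast
  then have "2 \<le> card P"
    using card_mono[OF finite_P sub] Min_less_Max_add_one_diff_Min by simp
  moreover have "card (P - {Min P, Max P + 1 - Min P}) = card P - 2"
    using sub Min_less_Max_add_one_diff_Min finite_P by (simp add: card_Diff_subset)
  ultimately show ?thesis
    using finite_P Max_add_one_not_mem by (simp add: move_smallest_def)
qed

lemma Max_move_smallest: "Max (move_smallest P) = Max P + 1"
  using finite_P by (intro Max_eqI) (auto simp: move_smallest_def dest: Max_ge[OF finite_P])

lemma top_run_move_smallest: "top_run (move_smallest P) = Min P"
proof (rule top_run_eqI)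
  show "Max (move_smallest P) - Min P \<notin> move_smallest P"
    unfolding Max_move_smallest using Min_pos Min_less_Max_add_one_diff_Min by (simp add: move_smallest_def)
next
  fix i assume "i < Min P"
  show "Max (move_smallest P) - i \<in> move_smallest P"
  proof (cases i)
    case 0
    then show ?thesis unfolding Max_move_smallest by (simp add: move_smallest_def)
  next
    case (Suc i')
    have "Max P - i' \<in> P"
      using \<open>i < Min P\<close> Suc movable by (intro top_run_mem) (auto simp: smallest_movable_def)
    moreover have "Min P < Max P - i'" "Max P - i' \<noteq> Max P + 1 - Min P"
      using \<open>i < Min P\<close> Suc Min_less_Max_add_one_diff_Min by auto
    ultimately show ?thesis
      unfolding Max_move_smallest using Suc by (simp add: move_smallest_def)
  qed
qed

lemma Min_less_Min_move_smallest: "Min P < Min (move_smallest P)"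
proof -
  have "Min P < x" if "x \<in> move_smallest P" for x
    using that Min_less_Max_add_one_diff_Min
    by (auto simp: move_smallest_def dest: Min_le[OF finite_P])
  then show ?thesis
    using finite_P by (simp add: move_smallest_def)
qed

lemma run_movable_move_smallest: "run_movable (move_smallest P)"
  using Min_less_Min_move_smallest Min_less_Max_add_one_diff_Min
  unfolding run_movable_def top_run_move_smallest Max_move_smallest by linarith

lemma move_run_move_smallest: "move_run (move_smallest P) = P"
proof -
  have "move_run (move_smallest P) =
      insert (Min P) (insert (Max P + 1 - Min P) (move_smallest P - {Max P + 1}))"
    by (simp add: move_run_def top_run_move_smallest Max_move_smallest)
  also have "move_smallest P - {Max P + 1} = P - {Min P, Max P + 1 - Min P}"
    using Max_add_one_not_mem by (auto simp: move_smallest_def)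
  finally show ?thesis
    using Max_add_one_diff_Min_mem Min_in[OF finite_P P_nonempty] by auto
qed

end

context
  assumes movable: "run_movable P"
begin

lemma top_run_less_Max_diff_top_run: "top_run P < Max P - top_run P"
  using movable Min_add_top_run_le unfolding run_movable_def by linarith

lemma top_run_not_mem: "top_run P \<notin> P"
  using movable finite_P unfolding run_movable_def by (auto dest: Min_le)

lemma sum_move_run: "\<Sum>(move_run P) = \<Sum>P"
proof -
  have "\<Sum>(move_run P) = top_run P + (Max P - top_run P) + \<Sum>(P - {Max P})"
    using finite_P top_run_not_mem top_run_less_Max_diff_top_run Max_diff_top_run_not_mem[OF zero_not_mem_P]
    by (simp add: move_run_def)
  also have "\<dots> = \<Sum>P"
    using finite_P P_nonempty top_run_less_Max_diff_top_run by (simp add: sum.remove[of P "Max P"])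
  finally show ?thesis .
qed

lemma card_move_run: "card (move_run P) = card P + 1"
proof -
  have "0 < card P"
    using finite_P P_nonempty by (simp add: card_gt_0_iff)
  then show ?thesis
    using finite_P Max_in[OF finite_P P_nonempty] top_run_not_mem top_run_less_Max_diff_top_run
      Max_diff_top_run_not_mem[OF zero_not_mem_P]
    by (simp add: move_run_def)
qed

lemma Max_move_run: "Max (move_run P) + 1 = Max P"
proof -
  have "Max (move_run P) = Max P - 1"
  proof (rule Max_eqI)
    show "finite (move_run P)"
      using finite_P by (simp add: move_run_def)
    show "x \<le> Max P - 1" if "x \<in> move_run P" for x
      using that top_run_pos top_run_less_Max_diff_top_run
      by (auto simp: move_run_def dest: Max_ge[OF finite_P])
    show "Max P - 1 \<in> move_run P"
    proof (cases "top_run P = 1")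
      case False
      then have "Max P - 1 \<in> P"
        using top_run_pos by (intro top_run_mem) simp
      moreover have "Max P - 1 \<noteq> Max P"
        using top_run_less_Max_diff_top_run by linarith
      ultimately show ?thesis
        by (simp add: move_run_def)
    qed (simp add: move_run_def)
  qed
  then show ?thesis
    using top_run_less_Max_diff_top_run by simp
qed

lemma Min_move_run: "Min (move_run P) = top_run P"
  using finite_P movable top_run_less_Max_diff_top_run
  by (intro Min_eqI) (auto simp: move_run_def run_movable_def dest: Min_le[OF finite_P])

lemma top_run_le_top_run_move_run: "top_run P \<le> top_run (move_run P)"
proof (rule top_run_geI)
  show "0 \<notin> move_run P"
    using zero_not_mem_P top_run_pos top_run_less_Max_diff_top_run by (simp add: move_run_def)
next
  fix i assume "i < top_run P"
  show "Max (move_run P) - i \<in> move_run P"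
  proof (cases "Suc i = top_run P")
    case True
    then have "Max (move_run P) - i = Max P - top_run P"
      using Max_move_run by linarith
    then show ?thesis
      by (simp add: move_run_def)
  next
    case False
    then have "Max P - Suc i \<in> P"
      using \<open>i < top_run P\<close> by (intro top_run_mem) simp
    moreover have "Max (move_run P) - i = Max P - Suc i" "Max P - Suc i \<noteq> Max P"
      using Max_move_run top_run_less_Max_diff_top_run by linarith+
    ultimately show ?thesis
      using top_run_less_Max_diff_top_run by (simp add: move_run_def)
  qed
qed

lemma smallest_movable_move_run: "smallest_movable (move_run P)"
  using top_run_le_top_run_move_run top_run_less_Max_diff_top_run Max_move_run
  unfolding smallest_movable_def Min_move_run by linarith

lemma move_smallest_move_run: "move_smallest (move_run P) = P"
proof -
  have partner: "Max (move_run P) + 1 - Min (move_run P) = Max P - top_run P"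
    using Max_move_run by (simp add: Min_move_run)
  have "move_smallest (move_run P) =
      insert (Max P) (move_run P - {top_run P, Max P - top_run P})"
    unfolding move_smallest_def partner Max_move_run Min_move_run ..
  also have "move_run P - {top_run P, Max P - top_run P} = P - {Max P}"
    using top_run_not_mem Max_diff_top_run_not_mem[OF zero_not_mem_P]
    by (auto simp: move_run_def)
  finally show ?thesis
    using Max_in[OF finite_P P_nonempty] by auto
qed

end

context
  assumes not_exceptional: "\<not> franklin_exceptional P"
begin

lemma franklin_cases:
  obtains "smallest_movable P" "franklin P = move_smallest P" "run_movable (franklin P)"
  | "run_movable P" "franklin P = move_run P" "smallest_movable (franklin P)"
proof (cases "smallest_movable P")
  case True
  then show ?thesis
    using that(1) run_movable_move_smallest by (simp add: franklin_def)
next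
  case False
  then have "run_movable P"
    using not_exceptional by (simp add: franklin_exceptional_def)
  then show ?thesis
    using that(2) False smallest_movable_move_run by (simp add: franklin_def)
qed

lemma franklin_franklin: "franklin (franklin P) = P"
proof (cases rule: franklin_cases)
  case 1
  then have "\<not> smallest_movable (franklin P)"
    by (auto simp: smallest_movable_def run_movable_def)
  then show ?thesis
    using 1 move_run_move_smallest by (simp add: franklin_def)
next
  case 2
  then show ?thesis
    using move_smallest_move_run by (simp add: franklin_def)
qed

lemma sum_franklin: "\<Sum>(franklin P) = \<Sum>P"
  by (cases rule: franklin_cases)
    (simp_all add: sum_move_smallest sum_move_run)

lemma finite_franklin: "finite (franklin P)"
  using finite_P by (simp add: franklin_def move_smallest_def move_run_def)

lemma zero_not_mem_franklin: "0 \<notin> franklin P"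
  using zero_not_mem_P top_run_pos top_run_less_Max_diff_top_run
  by (cases rule: franklin_cases) (auto simp: move_smallest_def move_run_def)

lemma franklin_neq: "franklin P \<noteq> P"
  using card_move_smallest card_move_run
  by (cases rule: franklin_cases) auto

lemma franklin_not_exceptional: "\<not> franklin_exceptional (franklin P)"
  by (cases rule: franklin_cases) (simp_all add: franklin_exceptional_def)

lemma minus_one_power_card_franklin: "(- 1 :: 'a :: ring_1) ^ card (franklin P) = - ((- 1) ^ card P)"
proof (cases rule: franklin_cases)
  case 1
  then show ?thesis
    using card_move_smallest[symmetric] by simp
next
  case 2
  then show ?thesis
    using card_move_run by simp
qed

lemma minus_one_power_Max_franklin: "(- 1 :: 'a :: ring_1) ^ Max (franklin P) = - ((- 1) ^ Max P)"
proof (cases rule: franklin_cases)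
  case 1
  then show ?thesis
    using Max_move_smallest by simp
next
  case 2
  then show ?thesis
    using Max_move_run[symmetric] by simp
qed

end

lemma franklin_exceptional_shape:
  assumes "franklin_exceptional P"
  shows "\<exists>r>0. P = {r..<2 * r} \<or> P = {Suc r..<Suc (2 * r)}"
proof -
  have Min_cases: "Min P = top_run P \<or> Min P = Suc (top_run P)"
    and Max_eq: "Max P + 1 = Min P + top_run P"
    using assms Min_add_top_run_le
    unfolding franklin_exceptional_def smallest_movable_def run_movable_def by linarith+
  have P_eq: "P = {Min P..<Max P + 1}"
  proof
    show "P \<subseteq> {Min P..<Max P + 1}"
      using Max_ge[OF finite_P] Min_le[OF finite_P] by fastforce
    show "{Min P..<Max P + 1} \<subseteq> P"
    proof
      fix x assume "x \<in> {Min P..<Max P + 1}"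
      then have "Max P - (Max P - x) \<in> P"
        using Max_eq by (intro top_run_mem) auto
      then show "x \<in> P"
        using \<open>x \<in> {Min P..<Max P + 1}\<close> by simp
    qed
  qed
  moreover have "{Min P..<Max P + 1} = {top_run P..<2 * top_run P} \<or>
      {Min P..<Max P + 1} = {Suc (top_run P)..<Suc (2 * top_run P)}"
    using Min_cases Max_eq by (auto simp: mult_2)
  ultimately show ?thesis
    using top_run_pos by auto
qed

end

lemma sum_distinct_partitions_franklin:
  fixes w :: "nat set \<Rightarrow> 'a :: ring_1"
  assumes "0 < n"
    and flip: "\<And>P. P \<in> distinct_partitions n \<Longrightarrow> \<not> franklin_exceptional P \<Longrightarrow> w (franklin P) = - w P"
  shows "sum w (distinct_partitions n) = sum w {P \<in> distinct_partitions n. franklin_exceptional P}"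
proof -
  let ?X = "{P \<in> distinct_partitions n. \<not> franklin_exceptional P}"
  have "P \<in> ?X \<Longrightarrow> finite P \<and> P \<noteq> {} \<and> 0 \<notin> P \<and> \<not> franklin_exceptional P" for P
    using \<open>0 < n\<close> by (auto simp: mem_distinct_partitions)
  then have "sum w ?X = 0"
    by (intro sum_involution_eq_0[where h = franklin])
      (auto simp: flip mem_distinct_partitions sum_franklin finite_franklin zero_not_mem_franklin
        franklin_neq franklin_not_exceptional franklin_franklin)
  have "sum w (distinct_partitions n) =
      sum w (distinct_partitions n \<inter> Collect franklin_exceptional) +
      sum w (distinct_partitions n - Collect franklin_exceptional)"
    by (rule sum.Int_Diff[OF finite_distinct_partitions])
  also have "distinct_partitions n - Collect franklin_exceptional = ?X"
    by blast
  also have "distinct_partitions n \<inter> Collect franklin_exceptional =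
      {P \<in> distinct_partitions n. franklin_exceptional P}"
    by blast
  finally show ?thesis
    using \<open>sum w ?X = 0\<close> by simp
qed

section \<open>The exceptional partitions and pentagonal numbers\<close>

lemma Max_atLeastLessThan: "(a :: nat) < b \<Longrightarrow> Max {a..<b} = b - 1"
  by (intro Max_eqI) auto

lemma Min_atLeastLessThan: "(a :: nat) < b \<Longrightarrow> Min {a..<b} = a"
  by (intro Min_eqI) auto

lemma top_run_atLeastLessThan: "0 < a \<Longrightarrow> a < b \<Longrightarrow> top_run {a..<b} = b - a"
  by (intro top_run_eqI) (auto simp: Max_atLeastLessThan)

lemma franklin_exceptional_atLeastLessThan:
  assumes "0 < r"
  shows "franklin_exceptional {r..<2 * r}" "franklin_exceptional {Suc r..<Suc (2 * r)}"
  using assms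
  by (simp_all add: franklin_exceptional_def smallest_movable_def run_movable_def
      Max_atLeastLessThan Min_atLeastLessThan top_run_atLeastLessThan)

text \<open>The pentagonal number \<open>k (3 k - 1) / 2\<close>.\<close>
fun pentagonal :: "nat \<Rightarrow> nat" where
  "pentagonal 0 = 0"
| "pentagonal (Suc k) = pentagonal k + 3 * k + 1"

lemma sum_atLeastLessThan_pentagonal: "\<Sum>{k..<2 * k} = pentagonal k"
proof (induction k)
  case (Suc k)
  have "\<Sum>{k..<Suc (Suc (2 * k))} = \<Sum>{k..<2 * k} + 2 * k + (2 * k + 1)"
    by (simp only: sum.op_ivl_Suc) simp
  moreover have "\<Sum>{k..<Suc (Suc (2 * k))} = k + \<Sum>{Suc k..<Suc (Suc (2 * k))}"
    by (rule sum.atLeast_Suc_lessThan) simp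
  ultimately show ?case
    using Suc by simp
qed simp

lemma sum_atLeastLessThan_Suc_pentagonal: "\<Sum>{Suc k..<Suc (2 * k)} = pentagonal k + k"
proof -
  have "\<Sum>{Suc k..<Suc (2 * k)} = (\<Sum>i\<in>{k..<2 * k}. i + 1)"
    unfolding sum.shift_bounds_Suc_ivl by simp
  also have "\<dots> = pentagonal k + k"
    by (simp only: sum.distrib sum_atLeastLessThan_pentagonal) simp
  finally show ?thesis .
qed

lemma mono_pentagonal: "mono pentagonal"
  by (rule mono_iff_le_Suc[THEN iffD2]) simp

lemma pentagonal_pos: "0 < k \<Longrightarrow> 0 < pentagonal k"
  by (cases k) auto

lemma pentagonal_coords_exist: "\<exists>k j. j \<le> 3 * k \<and> n = pentagonal k + j"
proof (induction n)
  case 0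
  show ?case
    by (intro exI[of _ 0]) simp
next
  case (Suc n)
  then obtain k j where "j \<le> 3 * k" "n = pentagonal k + j"
    by blast
  show ?case
  proof (cases "j < 3 * k")
    case True
    then show ?thesis
      using \<open>n = pentagonal k + j\<close> by (intro exI[of _ k] exI[of _ "Suc j"]) simp
  next
    case False
    then show ?thesis
      using \<open>j \<le> 3 * k\<close> \<open>n = pentagonal k + j\<close> by (intro exI[of _ "Suc k"] exI[of _ 0]) simp
  qed
qed

lemma pentagonal_coords_unique:
  assumes "pentagonal k + j = pentagonal k' + j'" "j \<le> 3 * k" "j' \<le> 3 * k'"
  shows "k = k' \<and> j = j'"
proof -
  have "\<not> k < k'" if "pentagonal k + j = pentagonal k' + j'" "j \<le> 3 * k" for k k' j j'
  proof
    assume "k < k'"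
    then have "pentagonal (Suc k) \<le> pentagonal k'"
      by (intro monoD[OF mono_pentagonal]) simp
    then show False
      using that by simp
  qed
  then have "k = k'"
    using assms by (metis linorder_neqE_nat)
  then show ?thesis
    using assms by simp
qed

lemma pentagonal_coords_induct [consumes 1, case_names zero step_j step_k]:
  assumes "j \<le> 3 * k"
    and "Q 0 0"
    and "\<And>k j. j < 3 * k \<Longrightarrow> Q k j \<Longrightarrow> Q k (Suc j)"
    and "\<And>k. Q k (3 * k) \<Longrightarrow> Q (Suc k) 0"
  shows "Q k j"
  using assms(1)
proof (induction k arbitrary: j)
  case 0
  then show ?case
    using assms(2) by simp
next
  case (Suc k)
  show ?case
    using Suc.prems
  proof (induction j)
    case 0
    then show ?case
      using Suc.IH assms(4) by simp
  next
    case (Suc j)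
    then show ?case
      using assms(3) by simp
  qed
qed

lemma franklin_exceptional_distinct_partitions:
  assumes "0 < k" "j \<le> 3 * k"
  shows "{P \<in> distinct_partitions (pentagonal k + j). franklin_exceptional P} =
    (if j = 0 then {{k..<2 * k}} else if j = k then {{Suc k..<Suc (2 * k)}} else {})"
    (is "?L = ?R")
proof
  show "?L \<subseteq> ?R"
  proof
    fix P assume "P \<in> ?L"
    then have P: "finite P" "P \<noteq> {}" "0 \<notin> P" "franklin_exceptional P" "\<Sum>P = pentagonal k + j"
      using pentagonal_pos[OF assms(1)] distinct_partitions_nonempty
      by (auto simp: mem_distinct_partitions)
    then obtain r where "0 < r" "P = {r..<2 * r} \<or> P = {Suc r..<Suc (2 * r)}"
      using franklin_exceptional_shape by blast
    then consider "P = {r..<2 * r}" | "P = {Suc r..<Suc (2 * r)}"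
      by blast
    then show "P \<in> ?R"
    proof cases
      case 1
      then have "pentagonal r + 0 = pentagonal k + j"
        using P(5) unfolding 1 sum_atLeastLessThan_pentagonal by simp
      then have "r = k \<and> 0 = j"
        using assms by (intro pentagonal_coords_unique) auto
      then show ?thesis
        using 1 by simp
    next
      case 2
      then have "pentagonal r + r = pentagonal k + j"
        using P(5) unfolding 2 sum_atLeastLessThan_Suc_pentagonal by simp
      then have "r = k \<and> r = j"
        using assms by (intro pentagonal_coords_unique) auto
      then show ?thesis
        using 2 assms(1) by simp
    qed
  qed
  have "{k..<2 * k} \<in> distinct_partitions (pentagonal k)"
    "{Suc k..<Suc (2 * k)} \<in> distinct_partitions (pentagonal k + k)"
    using assms(1) unfolding mem_distinct_partitions sum_atLeastLessThan_pentagonal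
      sum_atLeastLessThan_Suc_pentagonal by simp_all
  then show "?R \<subseteq> ?L"
    using franklin_exceptional_atLeastLessThan[OF assms(1)] by auto
qed

section \<open>Signed counts\<close>

definition sign_sum :: "('a \<Rightarrow> nat) \<Rightarrow> 'a set \<Rightarrow> int" where
  "sign_sum f S = (\<Sum>x\<in>S. (- 1) ^ f x)"

lemma sign_sum_franklin:
  assumes "0 < n"
    and "\<And>P. finite P \<Longrightarrow> P \<noteq> {} \<Longrightarrow> 0 \<notin> P \<Longrightarrow> \<not> franklin_exceptional P \<Longrightarrow>
      (- 1 :: int) ^ f (franklin P) = - ((- 1) ^ f P)"
  shows "sign_sum f (distinct_partitions n) =
    sign_sum f {P \<in> distinct_partitions n. franklin_exceptional P}"
  unfolding sign_sum_def
  using assms distinct_partitions_nonempty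
  by (intro sum_distinct_partitions_franklin) (auto simp: mem_distinct_partitions)

lemma sign_sum_card_distinct_partitions:
  assumes "0 < k" "j \<le> 3 * k"
  shows "sign_sum card (distinct_partitions (pentagonal k + j)) = (if j = 0 \<or> j = k then (- 1) ^ k else 0)"
  using assms pentagonal_pos[OF assms(1)]
  by (simp add: sign_sum_franklin minus_one_power_card_franklin franklin_exceptional_distinct_partitions)
    (simp add: sign_sum_def)

lemma sign_sum_Max_distinct_partitions:
  assumes "0 < k" "j \<le> 3 * k"
  shows "sign_sum Max (distinct_partitions (pentagonal k + j)) = (if j = 0 then - 1 else if j = k then 1 else 0)"
proof -
  have "odd (2 * k - 1)"
    using assms(1) by presburger
  then show ?thesis
    using assms pentagonal_pos[OF assms(1)]
    by (simp add: sign_sum_franklin minus_one_power_Max_franklin franklin_exceptional_distinct_partitions)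
      (simp add: sign_sum_def Max_atLeastLessThan)
qed

definition one_free_partitions :: "nat \<Rightarrow> nat set set" where
  "one_free_partitions n = {P \<in> distinct_partitions n. 1 \<notin> P}"

lemma one_free_partitions_0: "one_free_partitions 0 = {{}}"
  by (auto simp: one_free_partitions_def distinct_partitions_0)

lemma one_free_partitions_1: "one_free_partitions 1 = {}"
proof -
  have "P = {1}" if "P \<in> distinct_partitions 1" for P
    using that distinct_partitions_part_le[OF that] distinct_partitions_nonempty[OF that]
    by (fastforce simp: mem_distinct_partitions le_Suc_eq)
  then show ?thesis
    by (auto simp: one_free_partitions_def)
qed

lemma bij_betw_insert_one:
  assumes "0 < n"
  shows "bij_betw (insert 1) (one_free_partitions (n - 1)) {P \<in> distinct_partitions n. 1 \<in> P}"
proof (rule bij_betw_byWitness[where f' = "\<lambda>P. P - {1}"])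
  show "insert 1 ` one_free_partitions (n - 1) \<subseteq> {P \<in> distinct_partitions n. 1 \<in> P}"
    using assms by (auto simp: one_free_partitions_def mem_distinct_partitions)
  show "(\<lambda>P. P - {1}) ` {P \<in> distinct_partitions n. 1 \<in> P} \<subseteq> one_free_partitions (n - 1)"
    by (auto simp: one_free_partitions_def mem_distinct_partitions sum_diff1_nat)
qed (auto simp: one_free_partitions_def)

lemma sum_distinct_partitions_remove_one:
  assumes "0 < n"
  shows "sum w (distinct_partitions n) =
    sum w (one_free_partitions n) + (\<Sum>Q\<in>one_free_partitions (n - 1). w (insert 1 Q))"
proof -
  have "sum w (distinct_partitions n) =
      sum w (one_free_partitions n) + sum w {P \<in> distinct_partitions n. 1 \<in> P}"
    using finite_distinct_partitions
    by (subst sum.union_disjoint[symmetric]) (auto simp: one_free_partitions_def intro: arg_cong[where f = "sum w"])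
  also have "sum w {P \<in> distinct_partitions n. 1 \<in> P} = (\<Sum>Q\<in>one_free_partitions (n - 1). w (insert 1 Q))"
    by (rule sum.reindex_bij_betw[OF bij_betw_insert_one[OF assms], symmetric])
  finally show ?thesis .
qed

lemma sign_sum_card_remove_one:
  assumes "0 < n"
  shows "sign_sum card (distinct_partitions n) =
    sign_sum card (one_free_partitions n) - sign_sum card (one_free_partitions (n - 1))"
proof -
  have "(- 1 :: int) ^ card (insert 1 Q) = - ((- 1) ^ card Q)" if "Q \<in> one_free_partitions (n - 1)" for Q
    using that by (simp add: one_free_partitions_def mem_distinct_partitions)
  then show ?thesis
    unfolding sign_sum_def sum_distinct_partitions_remove_one[OF assms]
    by (simp add: sum_negf)
qed

text \<open>Here \<open>1 < n\<close> is needed: \<open>Max {}\<close> is unspecified, so the empty partition of \<open>0\<close>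
  has no sign.\<close>
lemma sign_sum_Max_remove_one:
  assumes "1 < n"
  shows "sign_sum Max (distinct_partitions n) =
    sign_sum Max (one_free_partitions n) + sign_sum Max (one_free_partitions (n - 1))"
proof -
  have "Max (insert 1 Q) = Max Q" if "Q \<in> one_free_partitions (n - 1)" for Q
  proof -
    have "finite Q" "Q \<noteq> {}" "0 \<notin> Q"
      using that assms distinct_partitions_nonempty
      by (auto simp: one_free_partitions_def mem_distinct_partitions)
    then have "0 < Max Q"
      using Max_in[of Q] by (metis gr0I)
    then show ?thesis
      using \<open>finite Q\<close> \<open>Q \<noteq> {}\<close> by simp
  qed
  then show ?thesis
    unfolding sign_sum_def sum_distinct_partitions_remove_one[OF order.strict_trans[OF zero_less_one assms]]
    by simp
qed

lemma sign_sum_card_one_free_partitions: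
  assumes "j \<le> 3 * k"
  shows "sign_sum card (one_free_partitions (pentagonal k + j)) = (if j < k then 0 else (- 1) ^ k)"
  using assms
proof (induction k j rule: pentagonal_coords_induct)
  case zero
  show ?case
    by (simp add: sign_sum_def one_free_partitions_0)
next
  case (step_j k j)
  then have "sign_sum card (one_free_partitions (pentagonal k + Suc j)) =
      (if Suc j = k then (- 1) ^ k else 0) + (if j < k then 0 else (- 1) ^ k)"
    using sign_sum_card_remove_one[of "pentagonal k + Suc j"] sign_sum_card_distinct_partitions[of k "Suc j"]
    by simp
  then show ?case
    by simp
next
  case (step_k k)
  then show ?case
    using sign_sum_card_remove_one[of "pentagonal (Suc k)"] sign_sum_card_distinct_partitions[of "Suc k" 0]
    by simp
qed

lemma sign_sum_Max_one_free_partitions: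
  assumes "j \<le> 3 * k" "0 < k"
  shows "sign_sum Max (one_free_partitions (pentagonal k + j)) =
    (- 1) ^ j * (if j < k then (if even k then - 2 else 0) else - 1)"
  using assms
proof (induction k j rule: pentagonal_coords_induct)
  case zero
  then show ?case
    by simp
next
  case (step_j k j)
  have "1 < pentagonal k + Suc j"
    using pentagonal_pos[OF \<open>0 < k\<close>] by simp
  then have "sign_sum Max (one_free_partitions (pentagonal k + Suc j)) =
      (if Suc j = k then 1 else 0) - (- 1) ^ j * (if j < k then (if even k then - 2 else 0) else - 1)"
    using step_j sign_sum_Max_remove_one[of "pentagonal k + Suc j"] sign_sum_Max_distinct_partitions[of k "Suc j"]
    by simp
  then show ?case
    by (auto simp: minus_one_power_iff)
next
  case (step_k k)
  show ?case
  proof (cases "k = 0")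
    case True
    then have "pentagonal (Suc k) + 0 = 1"
      by simp
    then show ?thesis
      unfolding sign_sum_def using True by (simp only: one_free_partitions_1) simp
  next
    case False
    then have "1 < pentagonal (Suc k)"
      using pentagonal_pos[of k] by simp
    then have "sign_sum Max (one_free_partitions (pentagonal (Suc k))) = - 1 + (- 1) ^ k"
      using False step_k sign_sum_Max_remove_one[of "pentagonal (Suc k)"]
        sign_sum_Max_distinct_partitions[of "Suc k" 0]
      by (simp add: minus_one_power_iff)
    then show ?thesis
      by (simp add: minus_one_power_iff)
  qed
qed

section \<open>The crank\<close>

lemma crank_difference_sign_sums:
  assumes "0 < n"
  shows "int (M_e n) - int (M_o n) =
    sign_sum Max (one_free_partitions n) - sign_sum card (one_free_partitions (n - 1))"
proof -
  define \<epsilon> where "\<epsilon> P = (if even (dcrank P) then 1 else - 1 :: int)" for P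
  have "int (M_e n) - int (M_o n) = sum \<epsilon> (distinct_partitions n)"
    using finite_distinct_partitions[of n]
    by (simp add: \<epsilon>_def M_e_def M_o_def sum.If_cases Int_def)
  also have "\<dots> = sum \<epsilon> (one_free_partitions n) + (\<Sum>Q\<in>one_free_partitions (n - 1). \<epsilon> (insert 1 Q))"
    by (rule sum_distinct_partitions_remove_one[OF assms])
  also have "sum \<epsilon> (one_free_partitions n) = sign_sum Max (one_free_partitions n)"
    unfolding sign_sum_def
    by (rule sum.cong) (auto simp: \<epsilon>_def dcrank_def one_free_partitions_def minus_one_power_iff)
  also have "(\<Sum>Q\<in>one_free_partitions (n - 1). \<epsilon> (insert 1 Q)) = - sign_sum card (one_free_partitions (n - 1))"
    unfolding sign_sum_def sum_negf[symmetric]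
    by (rule sum.cong) (auto simp: \<epsilon>_def dcrank_def one_free_partitions_def mem_distinct_partitions minus_one_power_iff)
  finally show ?thesis
    by simp
qed

lemma crank_difference_pentagonal:
  assumes "0 < k" "j \<le> 3 * k"
  shows "int (M_e (pentagonal k + j)) - int (M_o (pentagonal k + j)) =
    (if j = 0 then - 1
     else if j < k then (- 1) ^ j * (if even k then - 2 else 0)
     else if j = k then - ((- 1) ^ k)
     else - ((- 1) ^ j + (- 1) ^ k))"
proof (cases j)
  case 0
  obtain k' where k': "k = Suc k'"
    using assms(1) gr0_implies_Suc by blast
  have "pentagonal k + j - 1 = pentagonal k' + 3 * k'"
    using 0 k' by simp
  then show ?thesis
    using 0 k' assms pentagonal_pos[OF assms(1)] crank_difference_sign_sums[of "pentagonal k + j"]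
      sign_sum_Max_one_free_partitions[of j k] sign_sum_card_one_free_partitions[of "3 * k'" k']
    by (auto simp: minus_one_power_iff)
next
  case (Suc j')
  then have "pentagonal k + j - 1 = pentagonal k + j'"
    by simp
  then show ?thesis
    using Suc assms crank_difference_sign_sums[of "pentagonal k + j"]
      sign_sum_Max_one_free_partitions[of j k] sign_sum_card_one_free_partitions[of j' k]
    by (auto simp: minus_one_power_iff)
qed

theorem corollary1p8:
  shows "(\<forall>n::nat. n \<ge> 1 \<longrightarrow> \<bar>int (M_e n) - int (M_o n)\<bar> \<le> 2) \<and>
         infinite {n::nat. n \<ge> 1 \<and> M_e n = M_o n}"
proof
  show "\<forall>n::nat. n \<ge> 1 \<longrightarrow> \<bar>int (M_e n) - int (M_o n)\<bar> \<le> 2"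
  proof (intro allI impI)
    fix n :: nat
    assume "n \<ge> 1"
    obtain k j where "j \<le> 3 * k" "n = pentagonal k + j"
      using pentagonal_coords_exist by blast
    moreover have "0 < k"
      using \<open>n \<ge> 1\<close> calculation by (cases k) auto
    ultimately show "\<bar>int (M_e n) - int (M_o n)\<bar> \<le> 2"
      using crank_difference_pentagonal[of k j] by (auto simp: minus_one_power_iff)
  qed
  have "pentagonal (Suc k) + Suc (Suc k) \<in> {n. n \<ge> 1 \<and> M_e n = M_o n}" for k
    using crank_difference_pentagonal[of "Suc k" "Suc (Suc k)"] by (auto simp: minus_one_power_iff)
  moreover have "k \<le> pentagonal (Suc k) + Suc (Suc k)" for k
    by simp
  ultimately show "infinite {n::nat. n \<ge> 1 \<and> M_e n = M_o n}"
    unfolding infinite_nat_iff_unbounded_le by blast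
qed

end
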